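(* Let $\chi$ be a regular uncountable cardinal and $\theta>\chi$ a regular cardinal. If $\square_{(\chi,\theta)}$ holds, then $\theta$ has the strong non-reflection property for $\chi$: there is a function $h:\theta\to\chi$ such that for every $\delta<\theta$ with $\mathrm{cf}(\delta)=\chi$ there is a club $C$ of $\delta$ with $h\restriction C$ strictly increasing.
   Context: For cardinals $\chi,\sigma$, $\square_{(\chi,\sigma)}$ is the statement: $\chi<\sigma$ and there is a sequence $\langle C_\delta:\delta$ a limit ordinal with $\mathrm{cf}(\delta)<\delta$ and $\chi<\delta<\sigma\rangle$ such that (1) $C_\delta$ is a club subset of $\delta$, (2) $\mathrm{otp}(C_\delta)<\delta$, (3) if $\delta$ is an accumulation point of $C_\alpha$ then $C_\delta$ is defined and $C_\delta=\delta\cap C_\alpha$. *)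

theory Defs
  imports Main
begin

text \<open>Convention: the regular cardinal theta is represented by a well-ordered type 'a
  whose order type is theta; elements of 'a are the ordinals below theta, ordered by the
  class order. All ordinals mentioned in the statement are below theta.\<close>

definition ordr :: "('a::wellorder) rel" where
  "ordr = {(x, y). x \<le> y}"

definition otp_eq :: "('a::wellorder) set \<Rightarrow> 'a \<Rightarrow> bool" where
  "otp_eq A k \<longleftrightarrow> (Restr ordr A, Restr ordr {..<k}) \<in> ordIso"

definition otp_less :: "('a::wellorder) set \<Rightarrow> 'a \<Rightarrow> bool" where
  "otp_less A k \<longleftrightarrow> (Restr ordr A, Restr ordr {..<k}) \<in> ordLess"

definition cofinal_in :: "('a::wellorder) set \<Rightarrow> 'a \<Rightarrow> bool" where
  "cofinal_in A d \<longleftrightarrow> A \<subseteq> {..<d} \<and> (\<forall>b<d. \<exists>a\<in>A. b \<le> a)"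

definition cof :: "('a::wellorder) \<Rightarrow> 'a" where
  "cof d = (LEAST k. \<exists>A. cofinal_in A d \<and> otp_eq A k)"

definition limit_ord :: "('a::wellorder) \<Rightarrow> bool" where
  "limit_ord d \<longleftrightarrow> (\<exists>b. b < d) \<and> (\<forall>b<d. \<exists>c<d. b < c)"

definition is_cardinal :: "('a::wellorder) \<Rightarrow> bool" where
  "is_cardinal k \<longleftrightarrow> (\<forall>b<k. (card_of {..<b}, card_of {..<k}) \<in> ordLess)"

definition regular_uncountable_cardinal :: "('a::wellorder) \<Rightarrow> bool" where
  "regular_uncountable_cardinal k \<longleftrightarrow>
     is_cardinal k \<and> cof k = k \<and> (card_of (UNIV::nat set), card_of {..<k}) \<in> ordLess"

definition theta_regular_cardinal :: "('a::wellorder) itself \<Rightarrow> bool" where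
  "theta_regular_cardinal TYPE('a) \<longleftrightarrow>
     (\<forall>b::'a. (card_of {..<b}, card_of (UNIV::'a set)) \<in> ordLess) \<and>
     (\<forall>A::'a set. (\<forall>b. \<exists>a\<in>A. b \<le> a) \<longrightarrow> (Restr ordr A, (ordr::'a rel)) \<in> ordIso)"

definition acc_pt :: "('a::wellorder) set \<Rightarrow> 'a \<Rightarrow> bool" where
  "acc_pt C d \<longleftrightarrow> (\<exists>c\<in>C. c < d) \<and> (\<forall>b<d. \<exists>c\<in>C. b < c \<and> c < d)"

definition club_in :: "('a::wellorder) set \<Rightarrow> 'a \<Rightarrow> bool" where
  "club_in C d \<longleftrightarrow> cofinal_in C d \<and> (\<forall>g<d. acc_pt C g \<longrightarrow> g \<in> C)"

definition sq_dom :: "('a::wellorder) \<Rightarrow> 'a \<Rightarrow> bool" where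
  "sq_dom chi d \<longleftrightarrow> limit_ord d \<and> cof d < d \<and> chi < d"

definition square :: "('a::wellorder) \<Rightarrow> bool" where
  "square chi \<longleftrightarrow> (\<exists>C :: 'a \<Rightarrow> 'a set.
     \<forall>a. sq_dom chi a \<longrightarrow>
        club_in (C a) a \<and> otp_less (C a) a \<and>
        (\<forall>d. acc_pt (C a) d \<longrightarrow> sq_dom chi d \<and> C d = C a \<inter> {..<d}))"

definition strong_nonreflection :: "('a::wellorder) \<Rightarrow> bool" where
  "strong_nonreflection chi \<longleftrightarrow> (\<exists>h :: 'a \<Rightarrow> 'a. (\<forall>x. h x < chi) \<and>
     (\<forall>d. cof d = chi \<longrightarrow>
        (\<exists>C. club_in C d \<and> (\<forall>x\<in>C. \<forall>y\<in>C. x < y \<longrightarrow> h x < h y))))"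

end

theory Submission
  imports Defs "HOL-Library.Countable_Set_Type"
begin

(* Let h(x) = x for x < chi and h(delta) = h(otp C_delta) on the domain of the square
   sequence. By induction on delta we show: if delta has uncountable cofinality at most chi,
   then h is strictly increasing on a club of delta. If delta <= chi, h is the identity.
   Otherwise C_delta is a club of order type epsilon < delta with increasing enumeration pi;
   epsilon again has uncountable cofinality at most chi, so h increases on a club E of epsilon.
   The points pi(e), e in E, that are accumulation points of C_delta form a club of delta:
   pi is continuous, and uncountable cofinality makes the limit points of E unbounded in
   epsilon. Coherence gives C_pi(e) = C_delta below pi(e), of order type e, so h(pi e) = h(e). *)

lemma Well_order_ordr: "Well_order (ordr :: 'a::wellorder rel)"
proof -
  have F: "Field (ordr :: 'a rel) = UNIV" unfolding ordr_def Field_def by auto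
  have "Linear_order (ordr :: 'a rel)"
    unfolding linear_order_on_def partial_order_on_def preorder_on_def refl_on_def
      trans_on_def antisym_on_def total_on_def F
    by (auto simp: ordr_def)
  moreover have "(ordr :: 'a rel) - Id = {(x, y). x < y}" by (auto simp: ordr_def)
  then have "wf ((ordr :: 'a rel) - Id)" using wf by simp
  ultimately show ?thesis unfolding well_order_on_def by simp
qed

lemma Field_Restr_ordr: "Field (Restr ordr A) = (A :: 'a::wellorder set)"
  unfolding Field_def ordr_def by auto

lemma mono_on_imp_strict_mono_on_inv_into:
  fixes f :: "'a::linorder \<Rightarrow> 'b::linorder"
  assumes "mono_on A f"
  shows "strict_mono_on (f ` A) (inv_into A f)"
proof (rule strict_mono_onI)
  fix x y assume "x \<in> f ` A" "y \<in> f ` A" "x < y"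
  then have "inv_into A f x \<in> A" "inv_into A f y \<in> A"
    and "f (inv_into A f x) = x" "f (inv_into A f y) = y"
    by (auto intro: inv_into_into f_inv_into_f)
  with \<open>x < y\<close> show "inv_into A f x < inv_into A f y"
    using mono_onD[OF assms] by (metis leD not_le_imp_less)
qed

lemma bij_betw_strict_mono_on_inv_into:
  fixes f :: "'a::linorder \<Rightarrow> 'b::linorder"
  assumes "bij_betw f A B" and "strict_mono_on A f"
  shows "bij_betw (inv_into A f) B A" and "strict_mono_on B (inv_into A f)"
  using bij_betw_inv_into[OF assms(1)] assms(1)
    mono_on_imp_strict_mono_on_inv_into[OF strict_mono_on_imp_mono_on[OF assms(2)]]
  by (auto simp: bij_betw_def)

lemma iso_Restr_ordr_iff:
  "iso (Restr ordr A) (Restr ordr B) f \<longleftrightarrow> bij_betw f A B \<and> strict_mono_on A f"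
proof -
  have "(\<forall>x\<in>A. \<forall>y\<in>A. x \<le> y \<longleftrightarrow> f x \<le> f y) \<longleftrightarrow> strict_mono_on A f"
    by (metis strict_mono_onI strict_mono_on_less_eq not_le)
  moreover have "bij_betw f A B \<Longrightarrow> x \<in> A \<Longrightarrow> f x \<in> B" for x
    by (auto simp: bij_betw_def)
  ultimately show ?thesis
    unfolding iso_iff2 Field_Restr_ordr by (auto simp: ordr_def)
qed

definition enumerates :: "('a::wellorder \<Rightarrow> 'a) \<Rightarrow> 'a \<Rightarrow> 'a set \<Rightarrow> bool" where
  "enumerates f k A \<longleftrightarrow> bij_betw f {..<k} A \<and> strict_mono_on {..<k} f"

lemma otp_eq_iff_enumerates: "otp_eq A k \<longleftrightarrow> (\<exists>f. enumerates f k A)"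
proof
  assume "otp_eq A k"
  then obtain g where "bij_betw g A {..<k}" "strict_mono_on A g"
    unfolding otp_eq_def ordIso_def by (auto simp: iso_Restr_ordr_iff)
  then have "enumerates (inv_into A g) k A"
    unfolding enumerates_def by (blast intro: bij_betw_strict_mono_on_inv_into)
  then show "\<exists>f. enumerates f k A" by blast
next
  assume "\<exists>f. enumerates f k A"
  then obtain f where "bij_betw f {..<k} A" "strict_mono_on {..<k} f"
    unfolding enumerates_def by blast
  then have "iso (Restr ordr A) (Restr ordr {..<k}) (inv_into {..<k} f)"
    unfolding iso_Restr_ordr_iff by (blast intro: bij_betw_strict_mono_on_inv_into)
  then show "otp_eq A k"
    unfolding otp_eq_def ordIso_def using Well_order_Restr[OF Well_order_ordr] by auto
qed

lemma enumerates_lessThan: "enumerates id k {..<k}"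
  unfolding enumerates_def by (simp add: strict_mono_on_id)

lemma strict_mono_on_lessThan_ge:
  fixes g :: "'a::wellorder \<Rightarrow> 'a"
  assumes "strict_mono_on {..<k} g" and "x < k"
  shows "x \<le> g x"
  using \<open>x < k\<close>
proof (induction x rule: less_induct)
  case (less x)
  show ?case
  proof (rule ccontr)
    assume "\<not> x \<le> g x"
    then have "g x < x" by simp
    with less have "g x \<le> g (g x)" and "g (g x) < g x"
      using strict_mono_onD[OF assms(1)] by auto
    then show False by simp
  qed
qed

lemma strict_mono_on_lessThan_le:
  fixes g :: "'a::wellorder \<Rightarrow> 'a"
  assumes "strict_mono_on {..<k} g" and "g ` {..<k} \<subseteq> {..<k'}"
  shows "k \<le> k'"
proof (rule ccontr)
  assume "\<not> k \<le> k'"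
  then have "k' \<le> g k'" and "g k' < k'"
    using strict_mono_on_lessThan_ge[OF assms(1)] assms(2) by (auto simp: image_subset_iff)
  then show False by simp
qed

lemma enumerates_le:
  assumes "enumerates f k A" and "enumerates g k' B"
    and "strict_mono_on A s" and "s ` A \<subseteq> B"
  shows "k \<le> k'"
proof (rule strict_mono_on_lessThan_le)
  let ?h = "inv_into {..<k'} g \<circ> s \<circ> f"
  have g_inv: "bij_betw (inv_into {..<k'} g) B {..<k'}"
    "strict_mono_on B (inv_into {..<k'} g)"
    using assms(2) unfolding enumerates_def by (blast intro: bij_betw_strict_mono_on_inv_into)+
  have f: "f ` {..<k} = A" "strict_mono_on {..<k} f"
    using assms(1) unfolding enumerates_def bij_betw_def by auto
  show "strict_mono_on {..<k} ?h"
    using f assms(4) strict_mono_onD[OF assms(3)] strict_mono_onD[OF g_inv(2)]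
      strict_mono_onD[OF f(2)]
    by (intro strict_mono_onI) (auto simp: image_subset_iff)
  show "?h ` {..<k} \<subseteq> {..<k'}"
    using f(1) assms(4) g_inv(1) unfolding bij_betw_def by auto
qed

lemma enumerates_unique: "enumerates f k A \<Longrightarrow> enumerates g k' A \<Longrightarrow> k = k'"
  by (metis antisym enumerates_le strict_mono_on_id id_apply image_id order_refl)

lemma enumerates_restrict:
  assumes "enumerates f k A" and "e < k"
  shows "enumerates f e (A \<inter> {..<f e})"
proof -
  have f: "bij_betw f {..<k} A" "strict_mono_on {..<k} f"
    using assms(1) unfolding enumerates_def by auto
  have sub: "{..<e} \<subseteq> {..<k}" using assms(2) by auto
  have "f ` {..<e} = A \<inter> {..<f e}"
  proof
    show "f ` {..<e} \<subseteq> A \<inter> {..<f e}"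
      using f sub assms(2) strict_mono_onD[OF f(2)] by (auto simp: bij_betw_def)
    show "A \<inter> {..<f e} \<subseteq> f ` {..<e}"
    proof
      fix c assume c: "c \<in> A \<inter> {..<f e}"
      then obtain x where "x < k" "c = f x"
        using f(1) by (auto simp: bij_betw_def)
      with c assms(2) show "c \<in> f ` {..<e}"
        using strict_mono_on_less[OF f(2), of x e] by auto
    qed
  qed
  moreover have "strict_mono_on {..<e} f"
    using f(2) sub by (rule monotone_on_subset)
  ultimately show ?thesis
    unfolding enumerates_def bij_betw_def using strict_mono_on_imp_inj_on by blast
qed

lemma otp_exists:
  fixes A :: "'a::wellorder set"
  assumes "A \<subseteq> {..<d}"
  shows "\<exists>k\<le>d. otp_eq A k"
proof -
  let ?r = "Restr ordr {..<d}" and ?rA = "Restr ordr A"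
  have W: "Well_order ?r" "Well_order ?rA" by (rule Well_order_Restr[OF Well_order_ordr])+
  have underS_lessThan: "Restr (Restr ordr B) (underS (Restr ordr B) a) = Restr ordr (B \<inter> {..<a})"
    if "a \<in> B" for a and B :: "'a set"
    using that unfolding underS_def ordr_def by auto
  from ordLess_or_ordLeq[OF W] show ?thesis
  proof
    \<comment> \<open>impossible: \<open>{..<d}\<close> would be the order type of a proper initial segment
      \<open>A \<inter> {..<a}\<close>, forcing \<open>d \<le> a\<close>\<close>
    assume "(?r, ?rA) \<in> ordLess"
    then obtain a where a: "a \<in> A" "(?r, Restr ?rA (underS ?rA a)) \<in> ordIso"
      using ordLess_iff_ordIso_Restr[OF W(2) W(1)] unfolding Field_Restr_ordr by blast
    have "otp_eq (A \<inter> {..<a}) d"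
      using ordIso_symmetric[OF a(2)] unfolding otp_eq_def underS_lessThan[OF a(1)] .
    then obtain f where "enumerates f d (A \<inter> {..<a})" by (auto simp: otp_eq_iff_enumerates)
    then have "d \<le> a"
      by (rule enumerates_le[OF _ enumerates_lessThan, where s = id]) (auto simp: strict_mono_on_id)
    with \<open>a \<in> A\<close> assms show ?thesis by auto
  next
    assume "(?rA, ?r) \<in> ordLeq"
    then consider "(?rA, ?r) \<in> ordIso" | "(?rA, ?r) \<in> ordLess" using ordLeq_iff_ordLess_or_ordIso by blast
    then show ?thesis
    proof cases
      case 1
      then show ?thesis unfolding otp_eq_def by auto
    next
      case 2
      then obtain a where a: "a \<in> {..<d}" "(?rA, Restr ?r (underS ?r a)) \<in> ordIso"
        using ordLess_iff_ordIso_Restr[OF W(1) W(2)] unfolding Field_Restr_ordr by blast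
      moreover have "{..<d} \<inter> {..<a} = {..<a}" using a(1) by auto
      ultimately have "otp_eq A a" unfolding otp_eq_def underS_lessThan[OF a(1)] by simp
      with a(1) show ?thesis by (auto intro: less_imp_le)
    qed
  qed
qed

definition otp :: "'a::wellorder set \<Rightarrow> 'a" where
  "otp A = (LEAST k. otp_eq A k)"

lemma otp_eq_unique: "otp_eq A k \<Longrightarrow> otp_eq A k' \<Longrightarrow> k = k'"
  unfolding otp_eq_iff_enumerates by (auto dest: enumerates_unique)

lemma otp_eqD: "otp_eq A k \<Longrightarrow> otp A = k"
  unfolding otp_def by (rule Least_equality) (auto dest: otp_eq_unique)

lemma otp_lessD:
  assumes "otp_less A d" and "A \<subseteq> {..<d}"
  shows "otp_eq A (otp A) \<and> otp A < d"
proof -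
  obtain k where k: "k \<le> d" "otp_eq A k" using otp_exists[OF assms(2)] by auto
  have "k \<noteq> d"
    using k assms(1) not_ordLess_ordIso unfolding otp_eq_def otp_less_def by blast
  with k show ?thesis by (simp add: otp_eqD)
qed

lemma cof_le: "cofinal_in A d \<Longrightarrow> otp_eq A k \<Longrightarrow> cof d \<le> k"
  unfolding cof_def by (rule Least_le) blast

lemma cof_witness: "\<exists>A. cofinal_in A d \<and> otp_eq A (cof d)"
proof -
  have "cofinal_in {..<d} d \<and> otp_eq {..<d} d"
    unfolding cofinal_in_def otp_eq_iff_enumerates using enumerates_lessThan by auto
  then have "\<exists>k A. cofinal_in A d \<and> otp_eq A k" by blast
  from LeastI_ex[OF this] show ?thesis unfolding cof_def .
qed

lemma cof_le_of_mono_on_cofinal: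
  assumes "mono_on A \<mu>" and "cofinal_in (\<mu> ` A) \<epsilon>" and "otp_eq A k"
  shows "cof \<epsilon> \<le> k"
proof -
  obtain k' where k': "otp_eq (\<mu> ` A) k'"
    using otp_exists[of "\<mu> ` A" \<epsilon>] assms(2) unfolding cofinal_in_def by blast
  obtain f g where "enumerates f k' (\<mu> ` A)" "enumerates g k A"
    using k' assms(3) unfolding otp_eq_iff_enumerates by blast
  moreover have "strict_mono_on (\<mu> ` A) (inv_into A \<mu>)"
    using assms(1) by (rule mono_on_imp_strict_mono_on_inv_into)
  moreover have "inv_into A \<mu> ` \<mu> ` A \<subseteq> A" by (auto intro: inv_into_into)
  ultimately have "k' \<le> k" by (rule enumerates_le)
  with cof_le[OF assms(2) k'] show ?thesis by (rule order_trans)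
qed

lemma cof_le_of_enumerates:
  assumes \<pi>: "enumerates \<pi> \<epsilon> C" and "cofinal_in C \<delta>"
  shows "cof \<epsilon> \<le> cof \<delta>"
proof -
  obtain A where A: "cofinal_in A \<delta>" "otp_eq A (cof \<delta>)" using cof_witness by blast
  have \<pi>_mono: "strict_mono_on {..<\<epsilon>} \<pi>" and \<pi>_onto: "\<pi> ` {..<\<epsilon>} = C"
    using \<pi> unfolding enumerates_def bij_betw_def by auto
  define \<mu> where "\<mu> a = (LEAST e. e < \<epsilon> \<and> a \<le> \<pi> e)" for a
  have \<mu>: "\<mu> a < \<epsilon> \<and> a \<le> \<pi> (\<mu> a)" if a: "a \<in> A" for a
  proof -
    obtain c where "c \<in> C" "a \<le> c"
      using A(1) assms(2) a unfolding cofinal_in_def by blast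
    then obtain e where "e < \<epsilon> \<and> a \<le> \<pi> e" using \<pi>_onto by blast
    then show ?thesis unfolding \<mu>_def by (rule LeastI)
  qed
  have \<mu>_least: "\<mu> a \<le> e" if "e < \<epsilon>" "a \<le> \<pi> e" for a e
    unfolding \<mu>_def using that by (intro Least_le) simp
  have "mono_on A \<mu>"
  proof (rule mono_onI)
    fix a a' assume "a \<in> A" "a' \<in> A" "a \<le> a'"
    then show "\<mu> a \<le> \<mu> a'" using \<mu>[of a'] by (intro \<mu>_least) auto
  qed
  moreover have "cofinal_in (\<mu> ` A) \<epsilon>"
    unfolding cofinal_in_def
  proof (intro conjI allI impI)
    show "\<mu> ` A \<subseteq> {..<\<epsilon>}" using \<mu> by auto
    fix b assume "b < \<epsilon>"
    then obtain a where a: "a \<in> A" "\<pi> b \<le> a"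
      using A(1) \<pi>_onto assms(2) unfolding cofinal_in_def by blast
    then have "\<pi> b \<le> \<pi> (\<mu> a)" using \<mu> order_trans by blast
    then have "b \<le> \<mu> a" using strict_mono_on_less_eq[OF \<pi>_mono] \<open>b < \<epsilon>\<close> \<mu> a by auto
    with a show "\<exists>x\<in>\<mu> ` A. b \<le> x" by blast
  qed
  ultimately show ?thesis using A(2) by (rule cof_le_of_mono_on_cofinal)
qed

definition uncountable_cof :: "'a::wellorder \<Rightarrow> bool" where
  "uncountable_cof d \<longleftrightarrow> (\<forall>S \<subseteq> {..<d}. countable S \<longrightarrow> (\<exists>b<d. \<forall>s\<in>S. s < b))"

lemma uncountable_cofD:
  "uncountable_cof d \<Longrightarrow> S \<subseteq> {..<d} \<Longrightarrow> countable S \<Longrightarrow> \<exists>b<d. \<forall>s\<in>S. s < b"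
  unfolding uncountable_cof_def by blast

lemma uncountable_cof_imp_limit_ord:
  assumes "uncountable_cof d"
  shows "limit_ord d"
  unfolding limit_ord_def
proof (intro conjI allI impI)
  show "\<exists>b. b < d" using uncountable_cofD[OF assms, of "{}"] by auto
  fix b assume "b < d"
  then show "\<exists>c<d. b < c" using uncountable_cofD[OF assms, of "{b}"] by auto
qed

lemma uncountable_cofI:
  assumes "\<not> countable {..<cof d}"
  shows "uncountable_cof d"
  unfolding uncountable_cof_def
proof (intro allI impI)
  fix S assume S: "S \<subseteq> {..<d}" "countable S"
  show "\<exists>b<d. \<forall>s\<in>S. s < b"
  proof (rule ccontr)
    assume unbounded: "\<not> (\<exists>b<d. \<forall>s\<in>S. s < b)"
    have "cofinal_in S d"
      unfolding cofinal_in_def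
    proof (intro conjI allI impI)
      fix b assume "b < d"
      with unbounded show "\<exists>a\<in>S. b \<le> a" using not_less by blast
    qed (use S(1) in simp)
    obtain k where k: "otp_eq S k" using otp_exists[OF S(1)] by blast
    then obtain f where "enumerates f k S" unfolding otp_eq_iff_enumerates by blast
    then have "inj_on f {..<k}" "f ` {..<k} = S"
      unfolding enumerates_def bij_betw_def by auto
    then have "countable {..<k}" using countable_image_inj_on[of f "{..<k}"] S(2) by simp
    moreover have "{..<cof d} \<subseteq> {..<k}" using cof_le[OF \<open>cofinal_in S d\<close> k] by auto
    ultimately have "countable {..<cof d}" by (rule countable_subset[rotated])
    with assms show False by contradiction
  qed
qed

lemma regular_uncountable_cardinal_uncountable:
  assumes "regular_uncountable_cardinal chi"
  shows "\<not> countable {..<chi}"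
proof
  assume "countable {..<chi}"
  then have "(card_of {..<chi}, card_of (UNIV :: nat set)) \<in> ordLeq"
    using countable_card_of_nat by blast
  moreover have "(card_of (UNIV :: nat set), card_of {..<chi}) \<in> ordLess"
    using assms unfolding regular_uncountable_cardinal_def by blast
  ultimately show False using not_ordLess_ordLeq by blast
qed

lemma uncountable_cof_of_enumerates:
  assumes \<pi>: "enumerates \<pi> \<epsilon> C" and C: "cofinal_in C \<delta>" and "uncountable_cof \<delta>"
  shows "uncountable_cof \<epsilon>"
  unfolding uncountable_cof_def
proof (intro allI impI)
  fix S assume S: "S \<subseteq> {..<\<epsilon>}" "countable S"
  have \<pi>_mono: "strict_mono_on {..<\<epsilon>} \<pi>" and \<pi>_onto: "\<pi> ` {..<\<epsilon>} = C"
    using \<pi> unfolding enumerates_def bij_betw_def by auto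
  have "\<pi> ` S \<subseteq> {..<\<delta>}" using S(1) \<pi>_onto C unfolding cofinal_in_def by auto
  moreover have "countable (\<pi> ` S)" using S(2) by simp
  ultimately have "\<exists>b<\<delta>. \<forall>x\<in>\<pi> ` S. x < b" by (rule uncountable_cofD[OF assms(3)])
  then obtain b where "b < \<delta>" "\<forall>s\<in>S. \<pi> s < b" by auto
  moreover obtain e where "e < \<epsilon>" "b \<le> \<pi> e"
    using C \<pi>_onto \<open>b < \<delta>\<close> unfolding cofinal_in_def by blast
  ultimately have "s < e" if "s \<in> S" for s
    using strict_mono_on_less[OF \<pi>_mono, of s e] S(1) that by fastforce
  with \<open>e < \<epsilon>\<close> show "\<exists>b<\<epsilon>. \<forall>s\<in>S. s < b" by blast
qed

lemma acc_pt_mono: "acc_pt X g \<Longrightarrow> X \<subseteq> Y \<Longrightarrow> acc_pt Y g"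
  unfolding acc_pt_def by blast

lemma acc_pt_imp_limit_ord: "acc_pt X g \<Longrightarrow> limit_ord g"
  unfolding acc_pt_def limit_ord_def by blast

lemma ex_acc_pt_sup:
  fixes X :: "'a::wellorder set"
  assumes "X \<noteq> {}" and "\<forall>x\<in>X. \<exists>y\<in>X. x < y" and "\<forall>x\<in>X. x \<le> u"
  shows "\<exists>s\<le>u. (\<forall>x\<in>X. x < s) \<and> acc_pt X s"
proof (intro exI conjI)
  let ?s = "LEAST s. \<forall>x\<in>X. x \<le> s"
  show "?s \<le> u" using assms(3) by (rule Least_le)
  have "\<forall>x\<in>X. x \<le> ?s" using assms(3) by (rule LeastI)
  then show lt: "\<forall>x\<in>X. x < ?s" using assms(2) by (meson less_le_trans)
  show "acc_pt X ?s"
    unfolding acc_pt_def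
  proof (intro conjI allI impI)
    show "\<exists>c\<in>X. c < ?s" using assms(1) lt by blast
    fix b assume "b < ?s"
    have "\<not> (\<forall>x\<in>X. x \<le> b)"
    proof
      assume "\<forall>x\<in>X. x \<le> b"
      then have "?s \<le> b" by (rule Least_le)
      with \<open>b < ?s\<close> show False by simp
    qed
    with lt show "\<exists>c\<in>X. b < c \<and> c < ?s" by (auto simp: not_le)
  qed
qed

lemma acc_pt_enumerates_limit:
  assumes \<pi>: "enumerates \<pi> \<epsilon> C" and C: "club_in C \<delta>" and "s < \<epsilon>" and "limit_ord s"
  shows "acc_pt C (\<pi> s)"
proof -
  have \<pi>_mono: "strict_mono_on {..<\<epsilon>} \<pi>" and \<pi>_onto: "\<pi> ` {..<\<epsilon>} = C"
    using \<pi> unfolding enumerates_def bij_betw_def by auto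
  let ?X = "\<pi> ` {..<s}"
  have "?X \<noteq> {}" using assms(4) unfolding limit_ord_def by blast
  moreover have "\<forall>x\<in>?X. \<exists>y\<in>?X. x < y"
  proof
    fix x assume "x \<in> ?X"
    then obtain e where e: "e < s" "x = \<pi> e" by auto
    then obtain e' where "e' < s" "e < e'" using assms(4) unfolding limit_ord_def by blast
    moreover have "e < \<epsilon>" "e' < \<epsilon>" using e(1) \<open>e' < s\<close> assms(3) by auto
    ultimately show "\<exists>y\<in>?X. x < y"
      using e(2) strict_mono_onD[OF \<pi>_mono, of e e'] by (intro bexI[of _ "\<pi> e'"]) auto
  qed
  moreover have "\<forall>x\<in>?X. x \<le> \<pi> s"
  proof
    fix x assume "x \<in> ?X"
    then obtain e where "e < s" "x = \<pi> e" by auto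
    moreover have "e < \<epsilon>" using \<open>e < s\<close> assms(3) by simp
    ultimately show "x \<le> \<pi> s" using strict_mono_onD[OF \<pi>_mono, of e s] assms(3) by simp
  qed
  ultimately obtain t where t: "t \<le> \<pi> s" "\<forall>x\<in>?X. x < t" "acc_pt ?X t"
    using ex_acc_pt_sup[of ?X "\<pi> s"] by blast
  have "?X \<subseteq> C" using \<pi>_onto assms(3) by auto
  with t(3) have acc: "acc_pt C t" by (rule acc_pt_mono)
  have "\<pi> s \<in> C" using \<pi>_onto assms(3) by auto
  then have "t < \<delta>" using C t(1) unfolding club_in_def cofinal_in_def by auto
  with C acc have "t \<in> C" unfolding club_in_def by blast
  then obtain e where e: "e < \<epsilon>" "\<pi> e = t" using \<pi>_onto by auto
  have "s \<le> e"
  proof (rule ccontr)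
    assume "\<not> s \<le> e"
    then have "\<pi> e \<in> ?X" by auto
    with t(2) e(2) show False by auto
  qed
  then have "\<pi> s \<le> t" using strict_mono_on_less_eq[OF \<pi>_mono] e assms(3) by auto
  with t(1) acc show ?thesis by simp
qed

text \<open>Uncountable cofinality keeps the supremum of an \<open>\<omega>\<close>-sequence from \<open>E\<close> below \<open>d\<close>.\<close>
lemma club_in_acc_pt_unbounded:
  assumes E: "club_in E d" and "uncountable_cof d" and "b < d"
  shows "\<exists>s\<in>E. b < s \<and> acc_pt E s"
proof -
  have E_below: "E \<subseteq> {..<d}" using E unfolding club_in_def cofinal_in_def by blast
  have unbounded: "\<exists>e. e \<in> E \<and> x < e" if "x < d" for x
  proof -
    obtain y where "y < d" "x < y"
      using uncountable_cof_imp_limit_ord[OF assms(2)] \<open>x < d\<close> unfolding limit_ord_def by blast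
    then obtain e where "e \<in> E" "y \<le> e" using E unfolding club_in_def cofinal_in_def by blast
    with \<open>x < y\<close> show ?thesis using less_le_trans by blast
  qed
  have "\<exists>xs. \<forall>n. (xs n \<in> E \<and> b < xs n) \<and> xs n < xs (Suc n)"
  proof (rule dependent_nat_choice)
    show "\<exists>x. x \<in> E \<and> b < x" using unbounded[OF \<open>b < d\<close>] .
    fix x assume x: "x \<in> E \<and> b < x"
    with E_below have "x < d" by auto
    then obtain y where "y \<in> E" "x < y" using unbounded by blast
    moreover from x \<open>x < y\<close> have "b < y" by (blast intro: less_trans)
    ultimately show "\<exists>y. (y \<in> E \<and> b < y) \<and> x < y" by blast
  qed
  then obtain xs where xs_in: "\<And>n. xs n \<in> E" and "b < xs 0"
    and xs_less: "\<And>n. xs n < xs (Suc n)" by blast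
  have "range xs \<subseteq> {..<d}" using xs_in E_below by auto
  moreover have "countable (range xs)" by simp
  ultimately have "\<exists>u<d. \<forall>x\<in>range xs. x < u" by (rule uncountable_cofD[OF assms(2)])
  then obtain u where "u < d" and u: "\<forall>x\<in>range xs. x < u" by blast
  have "\<forall>x\<in>range xs. \<exists>y\<in>range xs. x < y"
  proof
    fix x assume "x \<in> range xs"
    then obtain n where "x = xs n" by blast
    with xs_less[of n] show "\<exists>y\<in>range xs. x < y" by blast
  qed
  moreover have "range xs \<noteq> {}" by simp
  moreover have "\<forall>x\<in>range xs. x \<le> u" using u less_imp_le by blast
  ultimately obtain s where s: "s \<le> u" "\<forall>x\<in>range xs. x < s" "acc_pt (range xs) s"
    using ex_acc_pt_sup[of "range xs" u] by blast
  have "range xs \<subseteq> E" using xs_in by auto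
  with s(3) have "acc_pt E s" by (rule acc_pt_mono)
  moreover have "s < d" using s(1) \<open>u < d\<close> by (rule le_less_trans)
  ultimately have "s \<in> E" using E unfolding club_in_def by blast
  have "b < s" using \<open>b < xs 0\<close> s(2) less_trans by blast
  with \<open>s \<in> E\<close> \<open>acc_pt E s\<close> show ?thesis by blast
qed

lemma acc_pt_image_strict_mono:
  assumes \<pi>: "strict_mono_on {..<\<epsilon>} \<pi>" and X: "X \<subseteq> {..<\<epsilon>}" and "e < \<epsilon>"
    and acc: "acc_pt (\<pi> ` X) (\<pi> e)"
  shows "acc_pt X e"
  unfolding acc_pt_def
proof (intro conjI allI impI)
  obtain x where "x \<in> X" "\<pi> x < \<pi> e" using acc unfolding acc_pt_def by blast
  moreover have "x < \<epsilon>" using \<open>x \<in> X\<close> X by auto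
  ultimately show "\<exists>c\<in>X. c < e"
    using strict_mono_on_less[OF \<pi>, of x e] \<open>e < \<epsilon>\<close> by auto
next
  fix b assume "b < e"
  with \<open>e < \<epsilon>\<close> have "b < \<epsilon>" by (rule less_trans[rotated])
  with \<open>b < e\<close> have "\<pi> b < \<pi> e" using strict_mono_onD[OF \<pi>] \<open>e < \<epsilon>\<close> by simp
  then obtain x where x: "x \<in> X" "\<pi> b < \<pi> x" "\<pi> x < \<pi> e" using acc unfolding acc_pt_def by blast
  then have "x < \<epsilon>" using X by auto
  with x \<open>b < \<epsilon>\<close> \<open>e < \<epsilon>\<close> show "\<exists>c\<in>X. b < c \<and> c < e"
    using strict_mono_on_less[OF \<pi>, of b x] strict_mono_on_less[OF \<pi>, of x e] by auto
qed

lemma club_in_enumerated_acc_pts: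
  assumes C: "club_in C \<delta>" and \<pi>: "enumerates \<pi> \<epsilon> C"
    and E: "club_in E \<epsilon>" and "uncountable_cof \<epsilon>"
  shows "club_in (\<pi> ` {e\<in>E. acc_pt C (\<pi> e)}) \<delta>"
proof -
  let ?X = "{e\<in>E. acc_pt C (\<pi> e)}"
  have \<pi>_mono: "strict_mono_on {..<\<epsilon>} \<pi>" and \<pi>_onto: "\<pi> ` {..<\<epsilon>} = C"
    using \<pi> unfolding enumerates_def bij_betw_def by auto
  have E_below: "E \<subseteq> {..<\<epsilon>}" using E unfolding club_in_def cofinal_in_def by blast
  have D_sub: "\<pi> ` ?X \<subseteq> C" using E_below \<pi>_onto by auto
  show ?thesis
    unfolding club_in_def cofinal_in_def
  proof (intro conjI allI impI)
    show "\<pi> ` ?X \<subseteq> {..<\<delta>}" using D_sub C unfolding club_in_def cofinal_in_def by blast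
  next
    fix b assume "b < \<delta>"
    then obtain e where e: "e < \<epsilon>" "b \<le> \<pi> e"
      using C \<pi>_onto unfolding club_in_def cofinal_in_def by blast
    then obtain s where s: "s \<in> E" "e < s" "acc_pt E s"
      using club_in_acc_pt_unbounded[OF E assms(4)] by blast
    then have "s < \<epsilon>" using E_below by auto
    then have "acc_pt C (\<pi> s)"
      using acc_pt_enumerates_limit[OF \<pi> C _ acc_pt_imp_limit_ord[OF s(3)]] by blast
    with s(1) have "\<pi> s \<in> \<pi> ` ?X" by blast
    moreover have "\<pi> e < \<pi> s" using e(1) s(2) \<open>s < \<epsilon>\<close> strict_mono_onD[OF \<pi>_mono, of e s] by simp
    with e(2) have "b \<le> \<pi> s" by simp
    ultimately show "\<exists>x\<in>\<pi> ` ?X. b \<le> x" by blast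
  next
    fix g assume "g < \<delta>" and acc: "acc_pt (\<pi> ` ?X) g"
    have "acc_pt C g" using acc D_sub by (rule acc_pt_mono)
    with C \<open>g < \<delta>\<close> have "g \<in> C" unfolding club_in_def by blast
    then obtain e where e: "e < \<epsilon>" "\<pi> e = g" using \<pi>_onto by auto
    have "?X \<subseteq> {..<\<epsilon>}" using E_below by auto
    moreover have "acc_pt (\<pi> ` ?X) (\<pi> e)" using acc e(2) by simp
    ultimately have "acc_pt ?X e" by (rule acc_pt_image_strict_mono[OF \<pi>_mono _ e(1)])
    then have "acc_pt E e" by (rule acc_pt_mono) auto
    with E e(1) have "e \<in> E" unfolding club_in_def by blast
    with e(2) \<open>acc_pt C g\<close> show "g \<in> \<pi> ` ?X" by blast
  qed
qed

definition square_seq :: "'a::wellorder \<Rightarrow> ('a \<Rightarrow> 'a set) \<Rightarrow> bool" where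
  "square_seq chi C \<longleftrightarrow> (\<forall>a. sq_dom chi a \<longrightarrow>
     club_in (C a) a \<and> otp_less (C a) a \<and>
     (\<forall>d. acc_pt (C a) d \<longrightarrow> sq_dom chi d \<and> C d = C a \<inter> {..<d}))"

lemma square_iff_square_seq: "square chi \<longleftrightarrow> (\<exists>C. square_seq chi C)"
  unfolding square_def square_seq_def by (rule refl)

text \<open>The test \<open>otp (C x) < x\<close> always succeeds on the domain of the square sequence and
  only makes the recursion well-founded; \<open>LEAST z. True\<close> is a junk value.\<close>
definition otp_descent :: "'a::wellorder \<Rightarrow> ('a \<Rightarrow> 'a set) \<Rightarrow> 'a \<Rightarrow> 'a" where
  "otp_descent chi C = wfrec {(x, y). x < y}
     (\<lambda>h x. if sq_dom chi x \<and> otp (C x) < x then h (otp (C x))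
            else if x < chi then x else (LEAST z. True))"

lemma otp_descent_unfold:
  "otp_descent chi C x =
    (if sq_dom chi x \<and> otp (C x) < x then otp_descent chi C (otp (C x))
     else if x < chi then x else (LEAST z. True))"
  unfolding otp_descent_def by (subst wfrec[OF wf]) (simp add: cut_apply)

lemma otp_descent_less:
  assumes "z < chi"
  shows "otp_descent chi C x < chi"
proof (induction x rule: less_induct)
  case (less x)
  have "(LEAST z. True) \<le> z" by (rule Least_le) simp
  then have "(LEAST z. True) < chi" using assms by (rule le_less_trans)
  with less show ?case by (subst otp_descent_unfold) simp
qed

lemma otp_descent_below: "x < chi \<Longrightarrow> otp_descent chi C x = x"
  by (subst otp_descent_unfold) (auto simp: sq_dom_def)

lemma otp_descent_strict_mono_on_lessThan:
  assumes "\<delta> \<le> chi"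
  shows "strict_mono_on {..<\<delta>} (otp_descent chi C)"
proof (rule strict_mono_onI)
  fix x y assume "x \<in> {..<\<delta>}" "y \<in> {..<\<delta>}" "x < y"
  with assms have "x < chi" "y < chi" by auto
  with \<open>x < y\<close> show "otp_descent chi C x < otp_descent chi C y"
    by (simp add: otp_descent_below)
qed

context
  fixes chi :: "'a::wellorder" and C :: "'a \<Rightarrow> 'a set"
  assumes C: "square_seq chi C"
begin

lemma square_seqD:
  assumes "sq_dom chi a"
  shows "club_in (C a) a" and "otp_less (C a) a"
    and "acc_pt (C a) d \<Longrightarrow> sq_dom chi d \<and> C d = C a \<inter> {..<d}"
  using C assms unfolding square_seq_def by blast+

lemma square_seq_otp:
  assumes "sq_dom chi x"
  shows "otp_eq (C x) (otp (C x)) \<and> otp (C x) < x"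
proof (rule otp_lessD)
  show "otp_less (C x) x" using square_seqD(2)[OF assms] .
  show "C x \<subseteq> {..<x}"
    using square_seqD(1)[OF assms] unfolding club_in_def cofinal_in_def by blast
qed

lemma otp_descent_sq_dom: "sq_dom chi x \<Longrightarrow> otp_descent chi C x = otp_descent chi C (otp (C x))"
  using square_seq_otp by (subst otp_descent_unfold) simp

text \<open>Coherence: \<open>C\<^sub>\<pi>\<^sub>e\<close> is an initial segment of \<open>C\<^sub>\<delta>\<close>, hence has order type \<open>e\<close>.\<close>
lemma otp_descent_enumerates_acc_pt:
  assumes "sq_dom chi \<delta>" and \<pi>: "enumerates \<pi> \<epsilon> (C \<delta>)"
    and "e < \<epsilon>" and "acc_pt (C \<delta>) (\<pi> e)"
  shows "otp_descent chi C (\<pi> e) = otp_descent chi C e"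
proof -
  have "sq_dom chi (\<pi> e)" and C_\<pi>e: "C (\<pi> e) = C \<delta> \<inter> {..<\<pi> e}"
    using square_seqD(3)[OF assms(1,4)] by blast+
  have "otp_eq (C (\<pi> e)) e"
    unfolding C_\<pi>e otp_eq_iff_enumerates using enumerates_restrict[OF \<pi> assms(3)] by blast
  then have "otp (C (\<pi> e)) = e" by (rule otp_eqD)
  with otp_descent_sq_dom[OF \<open>sq_dom chi (\<pi> e)\<close>] show ?thesis by simp
qed

lemma otp_descent_strict_mono_on_enumerated_acc_pts:
  assumes "sq_dom chi \<delta>" and \<pi>: "enumerates \<pi> \<epsilon> (C \<delta>)"
    and E: "E \<subseteq> {..<\<epsilon>}" "strict_mono_on E (otp_descent chi C)"
  shows "strict_mono_on (\<pi> ` {e\<in>E. acc_pt (C \<delta>) (\<pi> e)}) (otp_descent chi C)"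
proof (rule strict_mono_onI)
  fix x y
  assume "x \<in> \<pi> ` {e\<in>E. acc_pt (C \<delta>) (\<pi> e)}" "y \<in> \<pi> ` {e\<in>E. acc_pt (C \<delta>) (\<pi> e)}"
    and "x < y"
  then obtain e e' where e: "e \<in> E" "acc_pt (C \<delta>) (\<pi> e)" "x = \<pi> e"
    and e': "e' \<in> E" "acc_pt (C \<delta>) (\<pi> e')" "y = \<pi> e'"
    by blast
  have "e < \<epsilon>" "e' < \<epsilon>" using e(1) e'(1) E(1) by auto
  moreover have \<pi>_mono: "strict_mono_on {..<\<epsilon>} \<pi>" using \<pi> unfolding enumerates_def by blast
  ultimately have "e < e'" using strict_mono_on_less[OF \<pi>_mono, of e e'] \<open>x < y\<close> e(3) e'(3) by simp
  then have "otp_descent chi C e < otp_descent chi C e'"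
    using strict_mono_onD[OF E(2)] e(1) e'(1) by blast
  then show "otp_descent chi C x < otp_descent chi C y"
    using otp_descent_enumerates_acc_pt[OF assms(1) \<pi>] \<open>e < \<epsilon>\<close> \<open>e' < \<epsilon>\<close> e e' by simp
qed

lemma otp_descent_strict_mono_on_club:
  assumes "uncountable_cof \<delta>" and "cof \<delta> \<le> chi"
  shows "\<exists>E. club_in E \<delta> \<and> strict_mono_on E (otp_descent chi C)"
  using assms
proof (induction \<delta> rule: less_induct)
  case (less \<delta>)
  show ?case
  proof (cases "\<delta> \<le> chi")
    case True
    have "club_in {..<\<delta>} \<delta>" unfolding club_in_def cofinal_in_def by blast
    moreover have "strict_mono_on {..<\<delta>} (otp_descent chi C)"
      using True by (rule otp_descent_strict_mono_on_lessThan)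
    ultimately show ?thesis by blast
  next
    case False
    then have "cof \<delta> < \<delta>" using less.prems(2) by simp
    with False have sq: "sq_dom chi \<delta>"
      using uncountable_cof_imp_limit_ord[OF less.prems(1)] unfolding sq_dom_def by simp
    then have C\<delta>: "club_in (C \<delta>) \<delta>" by (rule square_seqD)
    then have cofinal: "cofinal_in (C \<delta>) \<delta>" unfolding club_in_def by blast
    obtain \<epsilon> \<pi> where "\<epsilon> < \<delta>" and \<pi>: "enumerates \<pi> \<epsilon> (C \<delta>)"
      using square_seq_otp[OF sq] unfolding otp_eq_iff_enumerates by blast
    have "uncountable_cof \<epsilon>"
      using uncountable_cof_of_enumerates[OF \<pi> cofinal less.prems(1)] .
    moreover have "cof \<epsilon> \<le> chi"
      using cof_le_of_enumerates[OF \<pi> cofinal] less.prems(2) by (rule order_trans)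
    ultimately obtain E where E: "club_in E \<epsilon>" "strict_mono_on E (otp_descent chi C)"
      using less.IH[OF \<open>\<epsilon> < \<delta>\<close>] by blast
    have E_below: "E \<subseteq> {..<\<epsilon>}" using E(1) unfolding club_in_def cofinal_in_def by blast
    let ?D = "\<pi> ` {e\<in>E. acc_pt (C \<delta>) (\<pi> e)}"
    have "club_in ?D \<delta>"
      using club_in_enumerated_acc_pts[OF C\<delta> \<pi> E(1) \<open>uncountable_cof \<epsilon>\<close>] .
    moreover have "strict_mono_on ?D (otp_descent chi C)"
      using otp_descent_strict_mono_on_enumerated_acc_pts[OF sq \<pi> E_below E(2)] .
    ultimately show ?thesis by blast
  qed
qed

end

theorem theorem1p7:
  fixes chi :: "'a::wellorder"
  assumes "theta_regular_cardinal TYPE('a)"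
    and "regular_uncountable_cardinal chi"
    and "square chi"
  shows "strong_nonreflection chi"
proof -
  obtain C where C: "square_seq chi C" using assms(3) square_iff_square_seq by blast
  have uncountable: "\<not> countable {..<chi}"
    using assms(2) by (rule regular_uncountable_cardinal_uncountable)
  then have "{..<chi} \<noteq> {}" by auto
  then obtain z where "z < chi" by auto
  show ?thesis
    unfolding strong_nonreflection_def
  proof (intro exI[of _ "otp_descent chi C"] conjI allI impI)
    fix x
    show "otp_descent chi C x < chi" using \<open>z < chi\<close> by (rule otp_descent_less)
  next
    fix d assume "cof d = chi"
    with uncountable have "uncountable_cof d" by (simp add: uncountable_cofI)
    then obtain E where "club_in E d" "strict_mono_on E (otp_descent chi C)"
      using otp_descent_strict_mono_on_club[OF C] \<open>cof d = chi\<close> by blast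
    then show "\<exists>E. club_in E d \<and> (\<forall>x\<in>E. \<forall>y\<in>E. x < y \<longrightarrow> otp_descent chi C x < otp_descent chi C y)"
      unfolding strict_mono_on_def by blast
  qed
qed

end
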